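(* Let $B_1,B_2$ be two commuting nilpotent operators on a finite-dimensional complex vector space $V$. Then there exist a nilpotent operator $B_2'$ on $V$ and a vector $w\in V$ such that (i) $B_2'$ commutes with $B_1$; (ii) every linear combination $\alpha B_2+\beta B_2'$ ($\alpha,\beta\in\mathbb C$) is nilpotent; (iii) $w$ is a cyclic vector for the pair $(B_1,B_2')$, i.e. no proper subspace of $V$ invariant under $B_1$ and $B_2'$ contains $w$. *)

theory Defs
  imports "HOL-Analysis.Analysis"
begin

fun mat_power :: "'a::comm_ring_1^'n^'n \<Rightarrow> nat \<Rightarrow> 'a^'n^'n" where
  "mat_power A 0 = mat 1"
| "mat_power A (Suc k) = A ** mat_power A k"

definition nilpotent_mat :: "'a::comm_ring_1^'n^'n \<Rightarrow> bool" where
  "nilpotent_mat A \<longleftrightarrow> (\<exists>k. mat_power A k = 0)"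

definition cyclic_pair :: "'a::field^'n^'n \<Rightarrow> 'a^'n^'n \<Rightarrow> 'a^'n \<Rightarrow> bool" where
  "cyclic_pair A B w \<longleftrightarrow>
     (\<forall>W. vec.subspace W \<and> (\<forall>x\<in>W. A *v x \<in> W) \<and> (\<forall>x\<in>W. B *v x \<in> W) \<and> w \<in> W
          \<longrightarrow> W = UNIV)"

end

theory Submission
  imports Defs
begin

text \<open>
  Write X = B1, Y = B2 and F_i = span {g_0, ..., g_(i-1)} + X V. Choose g_0, g_1, ...
  greedily: m_i is the least e such that ker X^e + X V is not contained in F_i, and
  g_i is a vector outside F_i with X^(m_i) g_i = 0 and Y g_i in F_i; it exists because Y is
  nilpotent and commutes with X. The minimality of the m_i makes the vectors X^a g_i
  (a < m_i) a basis of V and forces m_0 \<le> m_1 \<le> ..., so B2' : X^a g_i \<mapsto> X^a g_(i-1)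
  (and X^a g_0 \<mapsto> 0) is well defined and commutes with X. Every \<alpha> Y + \<beta> B2' commutes
  with X and maps F_(i+1) into F_i, so a power of it maps V into X V, and it is nilpotent.
  A subspace invariant under X and B2' containing the last g_i contains all of them, hence
  together with X V it spans V, and it is V by Nakayama's lemma for the nilpotent X.
\<close>

lemma mat_power_add: "mat_power A (a + b) = mat_power A a ** mat_power A b"
  by (induction a) (simp_all add: matrix_mul_assoc)

lemma mat_power_commute: "A ** B = B ** A \<Longrightarrow> mat_power A k ** B = B ** mat_power A k"
  by (induction k) (simp_all add: matrix_mul_assoc[symmetric], metis matrix_mul_assoc)

lemma mat_power_mult_vec_eq_0_mono:
  "mat_power A n *v v = 0 \<Longrightarrow> n \<le> e \<Longrightarrow> mat_power A e *v v = 0"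
  using mat_power_add[of A "e - n" n] by (simp add: matrix_vector_mul_assoc[symmetric])

lemma mat_mult_vec: "(mat c :: 'a::comm_ring_1^'n^'n) *v v = c *s v"
  unfolding vec_eq_iff matrix_vector_mult_def mat_def
  by (auto simp: if_distrib if_distribR cong: if_cong)

lemma subspace_range_mult_vec: "vec.subspace (range (\<lambda>u. A *v u))"
  by (rule vec.linear_subspace_image[OF matrix_vector_mul_linear_gen vec.subspace_UNIV])

lemma nilpotent_mat_last_power_outside:
  assumes "nilpotent_mat A" and "0 \<in> S" and "v \<notin> S"
  shows "\<exists>j. mat_power A j *v v \<notin> S \<and> A *v (mat_power A j *v v) \<in> S"
proof -
  obtain N where "mat_power A N = 0"
    using assms(1) unfolding nilpotent_mat_def by blast
  then have "mat_power A N *v v \<in> S"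
    using assms(2) by simp
  then show ?thesis
  proof (induction N)
    case 0
    then show ?case using assms(3) by simp
  next
    case (Suc N)
    then show ?case
      by (cases "mat_power A N *v v \<in> S") (auto simp: matrix_vector_mul_assoc)
  qed
qed

lemma mat_power_maps_chain:
  assumes "\<And>i v. i < k \<Longrightarrow> v \<in> F (Suc i) \<Longrightarrow> Z *v v \<in> F i" and "v \<in> F k"
  shows "mat_power Z k *v v \<in> F 0"
  using assms
proof (induction k arbitrary: v)
  case (Suc k)
  have "mat_power Z (Suc k) = mat_power Z k ** Z"
    using mat_power_add[of Z k 1] by simp
  then show ?case
    using Suc by (simp add: matrix_vector_mul_assoc[symmetric])
qed simp

lemma nilpotent_mat_if_power_into_range:
  assumes "nilpotent_mat X" and "Z ** X = X ** Z"
    and "\<And>v. mat_power Z k *v v \<in> range (\<lambda>u. X *v u)"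
  shows "nilpotent_mat Z"
proof -
  have "\<exists>u. mat_power Z (k * j) *v v = mat_power X j *v u" for j v
  proof (induction j arbitrary: v)
    case 0
    show ?case by simp
  next
    case (Suc j)
    obtain u where u: "mat_power Z k *v v = X *v u"
      using assms(3) by blast
    obtain u' where u': "mat_power Z (k * j) *v u = mat_power X j *v u'"
      using Suc by blast
    have "mat_power Z (k * Suc j) *v v = mat_power Z (k * j) *v (mat_power Z k *v v)"
      using mat_power_add[of Z "k * j" k] by (simp add: matrix_vector_mul_assoc add.commute)
    also have "\<dots> = X *v (mat_power Z (k * j) *v u)"
      using mat_power_commute[OF assms(2), of "k * j"] u by (simp add: matrix_vector_mul_assoc)
    also have "\<dots> = mat_power X (Suc j) *v u'"
      using u' by (simp add: matrix_vector_mul_assoc)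
    finally show ?case ..
  qed
  moreover obtain N where "mat_power X N = 0"
    using assms(1) unfolding nilpotent_mat_def by blast
  ultimately have "mat_power Z (k * N) = 0"
    by (metis matrix_eq matrix_vector_mult_0)
  then show ?thesis
    unfolding nilpotent_mat_def by blast
qed

lemma nakayama_nilpotent_mat:
  assumes "nilpotent_mat X" and "vec.subspace W" and "\<And>w. w \<in> W \<Longrightarrow> X *v w \<in> W"
    and "vec.span (W \<union> range (\<lambda>u. X *v u)) = UNIV"
  shows "W = UNIV"
proof -
  have cover: "\<exists>w\<in>W. \<exists>u. v = w + X *v u" for v
  proof -
    have "v \<in> vec.span (W \<union> range (\<lambda>u. X *v u))"
      using assms(4) by simp
    then show ?thesis
      unfolding vec.span_Un vec.span_eq_iff[THEN iffD2, OF assms(2)]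
        vec.span_eq_iff[THEN iffD2, OF subspace_range_mult_vec] by blast
  qed
  have "\<exists>w\<in>W. \<exists>u. v = w + mat_power X j *v u" for j v
  proof (induction j arbitrary: v)
    case 0
    show ?case using vec.subspace_0[OF assms(2)] by force
  next
    case (Suc j)
    obtain w u where w: "w \<in> W" "v = w + X *v u"
      using cover by blast
    obtain w' u' where w': "w' \<in> W" "u = w' + mat_power X j *v u'"
      using Suc by blast
    have "v = (w + X *v w') + mat_power X (Suc j) *v u'"
      using w w' by (simp add: matrix_vector_right_distrib matrix_vector_mul_assoc add.assoc)
    moreover have "w + X *v w' \<in> W"
      using w(1) w'(1) assms(3) vec.subspace_add[OF assms(2)] by blast
    ultimately show ?case by blast
  qed
  moreover obtain N where "mat_power X N = 0"
    using assms(1) unfolding nilpotent_mat_def by blast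
  ultimately show ?thesis
    by (metis UNIV_eq_I add.right_neutral matrix_vector_mult_0)
qed

lemma matrix_vector_mult_span_in_subspace:
  assumes "vec.subspace T" and "\<And>b. b \<in> B \<Longrightarrow> A *v b \<in> T" and "v \<in> vec.span B"
  shows "A *v v \<in> T"
proof -
  have "vec.span ((\<lambda>v. A *v v) ` B) \<subseteq> T"
    using assms(1,2) by (intro vec.span_minimal) auto
  then show ?thesis
    using assms(3) unfolding vec.linear_span_image[OF matrix_vector_mul_linear_gen] by blast
qed

lemma pencil_mult_vec:
  fixes A B :: "'a::field^'n^'n"
  shows "(mat \<alpha> ** A + mat \<beta> ** B) *v v = \<alpha> *s (A *v v) + \<beta> *s (B *v v)"
  by (simp add: matrix_vector_mult_add_rdistrib matrix_vector_mul_assoc[symmetric] mat_mult_vec)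

lemma pencil_commute:
  fixes A B X :: "'a::field^'n^'n"
  assumes "A ** X = X ** A" and "B ** X = X ** B"
  shows "(mat \<alpha> ** A + mat \<beta> ** B) ** X = X ** (mat \<alpha> ** A + mat \<beta> ** B)"
  using assms
  by (simp add: matrix_eq pencil_mult_vec matrix_vector_mul_assoc[symmetric] vec.add vec.scale
      del: matrix_vector_mult_add_rdistrib)

lemma obtain_least_snd_greatest_fst:
  fixes P :: "(nat \<times> nat) set"
  assumes "finite P" and "P \<noteq> {}"
  obtains i0 a0 where "(i0, a0) \<in> P" and "\<And>q. q \<in> P \<Longrightarrow> a0 \<le> snd q"
    and "\<And>i. (i, a0) \<in> P \<Longrightarrow> i \<le> i0"
proof -
  define a0 where "a0 = Min (snd ` P)"
  have "a0 \<in> snd ` P"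
    unfolding a0_def using assms by (intro Min_in) auto
  then have nonempty: "{i. (i, a0) \<in> P} \<noteq> {}"
    by force
  have fin: "finite {i. (i, a0) \<in> P}"
    using finite_imageI[OF assms(1), of fst] by (rule finite_subset[rotated]) force
  show ?thesis
  proof (rule that)
    show "(Max {i. (i, a0) \<in> P}, a0) \<in> P"
      using Max_in[OF fin nonempty] by simp
    show "a0 \<le> snd q" if "q \<in> P" for q
      unfolding a0_def using assms(1) that by simp
    show "i \<le> Max {i. (i, a0) \<in> P}" if "(i, a0) \<in> P" for i
      using fin that by simp
  qed
qed

locale commuting_nilpotent_pair =
  fixes X Y :: "'a::field^'n^'n"
  assumes nilpotent_X: "nilpotent_mat X" and nilpotent_Y: "nilpotent_mat Y"
    and commute: "X ** Y = Y ** X"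
begin

definition ker_plus_range :: "nat \<Rightarrow> ('a^'n) set" where
  "ker_plus_range e = {a + X *v b | a b. mat_power X e *v a = 0}"

definition flag :: "(nat \<Rightarrow> 'a^'n) \<Rightarrow> nat \<Rightarrow> ('a^'n) set" where
  "flag g i = vec.span (g ` {..<i} \<union> range (\<lambda>u. X *v u))"

text \<open>The last condition, together with the first two, says that m i is the least e
  for which ker_plus_range e is not contained in flag g i.\<close>
definition admissible :: "nat \<Rightarrow> (nat \<Rightarrow> 'a^'n) \<Rightarrow> (nat \<Rightarrow> nat) \<Rightarrow> bool" where
  "admissible k g m \<longleftrightarrow> (\<forall>i<k. mat_power X (m i) *v g i = 0 \<and> g i \<notin> flag g i
      \<and> Y *v g i \<in> flag g i \<and> (\<forall>e<m i. ker_plus_range e \<subseteq> flag g i))"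

lemma ker_subset_ker_plus_range: "mat_power X e *v a = 0 \<Longrightarrow> a \<in> ker_plus_range e"
  unfolding ker_plus_range_def by (metis (mono_tags) CollectI add_0_right vec.zero)

lemma subspace_flag: "vec.subspace (flag g i)"
  unfolding flag_def by (rule vec.subspace_span)

lemma mult_X_in_flag: "X *v u \<in> flag g i"
  unfolding flag_def by (rule vec.span_base) auto

lemma mat_power_pos_in_flag: "0 < e \<Longrightarrow> mat_power X e *v v \<in> flag g i"
  by (cases e) (auto simp: matrix_vector_mul_assoc[symmetric] mult_X_in_flag)

lemma generator_in_flag: "j < i \<Longrightarrow> g j \<in> flag g i"
  unfolding flag_def by (rule vec.span_base) auto

lemma flag_mono: "i \<le> j \<Longrightarrow> flag g i \<subseteq> flag g j"
  unfolding flag_def by (rule vec.span_mono) auto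

lemma flag_cong: "(\<And>j. j < i \<Longrightarrow> g j = g' j) \<Longrightarrow> flag g i = flag g' i"
  unfolding flag_def by (rule arg_cong[where f = vec.span]) auto

lemma flag_0: "flag g 0 = range (\<lambda>u. X *v u)"
  unfolding flag_def using subspace_range_mult_vec by simp

lemma commuting_mat_maps_flag:
  assumes "Z ** X = X ** Z" and "\<And>j. j < i' \<Longrightarrow> Z *v g j \<in> flag g i"
    and "v \<in> flag g i'"
  shows "Z *v v \<in> flag g i"
proof (rule matrix_vector_mult_span_in_subspace[OF subspace_flag])
  show "v \<in> vec.span (g ` {..<i'} \<union> range (\<lambda>u. X *v u))"
    using assms(3) unfolding flag_def .
  have "Z *v (X *v u) \<in> flag g i" for u
    using assms(1) by (metis matrix_vector_mul_assoc mult_X_in_flag)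
  then show "Z *v b \<in> flag g i" if "b \<in> g ` {..<i'} \<union> range (\<lambda>u. X *v u)" for b
    using that assms(2) by auto
qed

lemma subspace_eq_UNIV_if_contains_generators:
  assumes "flag g k = UNIV" and "vec.subspace W" and "\<And>w. w \<in> W \<Longrightarrow> X *v w \<in> W"
    and "\<And>i. i < k \<Longrightarrow> g i \<in> W"
  shows "W = UNIV"
proof (rule nakayama_nilpotent_mat[OF nilpotent_X assms(2,3)])
  have "flag g k \<subseteq> vec.span (W \<union> range (\<lambda>u. X *v u))"
    unfolding flag_def using assms(4) by (intro vec.span_mono) auto
  then show "vec.span (W \<union> range (\<lambda>u. X *v u)) = UNIV"
    using assms(1) by blast
qed

lemma admissibleD:
  assumes "admissible k g m" and "i < k"
  shows "mat_power X (m i) *v g i = 0" and "g i \<notin> flag g i" and "Y *v g i \<in> flag g i"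
    and "e < m i \<Longrightarrow> ker_plus_range e \<subseteq> flag g i"
  using assms unfolding admissible_def by auto

lemma admissible_exponent_pos: "admissible k g m \<Longrightarrow> i < k \<Longrightarrow> 0 < m i"
  using admissibleD(1,2)[of k g m i] vec.subspace_0[OF subspace_flag] by (cases "m i") auto

lemma admissible_exponent_mono:
  assumes adm: "admissible k g m" and "j < i" "i < k"
  shows "m j \<le> m i"
proof (rule ccontr)
  assume "\<not> m j \<le> m i"
  then have "ker_plus_range (m i) \<subseteq> flag g i"
    using admissibleD(4)[OF adm, of j "m i"] flag_mono[of j i g] assms by auto
  then show False
    using ker_subset_ker_plus_range admissibleD(1,2)[OF adm \<open>i < k\<close>] by blast
qed

lemma admissible_annihilated:
  "admissible k g m \<Longrightarrow> i < k \<Longrightarrow> m i \<le> e \<Longrightarrow> mat_power X e *v g i = 0"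
  using admissibleD(1) mat_power_mult_vec_eq_0_mono by blast

lemma exists_next_generator:
  assumes S: "vec.subspace S" "range (\<lambda>u. X *v u) \<subseteq> S" and "S \<noteq> UNIV"
  shows "\<exists>e b. (\<forall>e'<e. ker_plus_range e' \<subseteq> S) \<and> mat_power X e *v b = 0 \<and> b \<notin> S \<and> Y *v b \<in> S"
proof -
  obtain N where "mat_power X N = 0"
    using nilpotent_X unfolding nilpotent_mat_def by blast
  then have "\<not> ker_plus_range N \<subseteq> S"
    using ker_subset_ker_plus_range[of N] \<open>S \<noteq> UNIV\<close> by auto
  then have ex: "\<exists>e. \<not> ker_plus_range e \<subseteq> S" ..
  define e where "e = (LEAST e. \<not> ker_plus_range e \<subseteq> S)"
  have below: "\<forall>e'<e. ker_plus_range e' \<subseteq> S"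
    unfolding e_def using not_less_Least by blast
  have "\<not> ker_plus_range e \<subseteq> S"
    unfolding e_def by (rule LeastI_ex[OF ex])
  then obtain a b where a: "mat_power X e *v a = 0" and "a + X *v b \<notin> S"
    unfolding ker_plus_range_def by blast
  then have "a \<notin> S"
    using S vec.subspace_add by blast
  then obtain j where j: "mat_power Y j *v a \<notin> S" "Y *v (mat_power Y j *v a) \<in> S"
    using nilpotent_mat_last_power_outside[OF nilpotent_Y vec.subspace_0[OF S(1)]] by blast
  have "mat_power X e ** mat_power Y j = mat_power Y j ** mat_power X e"
    using mat_power_commute[OF mat_power_commute[OF commute, of e, symmetric]] by simp
  then have "mat_power X e *v (mat_power Y j *v a) = 0"
    using a by (metis matrix_vector_mul_assoc vec.zero)
  with below j show ?thesis by blast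
qed

lemma admissible_extend:
  assumes adm: "admissible k g m" and "flag g k \<noteq> UNIV"
  shows "\<exists>b e. admissible (Suc k) (g(k := b)) (m(k := e))"
proof -
  obtain e b where b: "\<forall>e'<e. ker_plus_range e' \<subseteq> flag g k" "mat_power X e *v b = 0"
    "b \<notin> flag g k" "Y *v b \<in> flag g k"
    using exists_next_generator[OF subspace_flag _ \<open>flag g k \<noteq> UNIV\<close>] mult_X_in_flag by blast
  have "flag (g(k := b)) i = flag g i" if "i \<le> k" for i
    using that by (intro flag_cong) auto
  then have "admissible (Suc k) (g(k := b)) (m(k := e))"
    using adm b unfolding admissible_def by (auto simp: less_Suc_eq)
  then show ?thesis by blast
qed

definition cells :: "nat \<Rightarrow> (nat \<Rightarrow> nat) \<Rightarrow> (nat \<times> nat) set" where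
  "cells k m = Sigma {..<k} (\<lambda>i. {..<m i})"

definition cell_vec :: "(nat \<Rightarrow> 'a^'n) \<Rightarrow> nat \<times> nat \<Rightarrow> 'a^'n" where
  "cell_vec g p = mat_power X (snd p) *v g (fst p)"

lemma finite_cells: "finite (cells k m)"
  unfolding cells_def by auto

lemma card_cells: "card (cells k m) = (\<Sum>i<k. m i)"
  unfolding cells_def by (simp add: card_SigmaI)

lemma cell_vec_in_flag: "i < i' \<or> 0 < a \<Longrightarrow> cell_vec g (i, a) \<in> flag g i'"
  unfolding cell_vec_def by (cases "a = 0") (auto simp: generator_in_flag mat_power_pos_in_flag)

lemma mult_X_cell_vec: "X *v cell_vec g (i, a) = cell_vec g (i, Suc a)"
  unfolding cell_vec_def by (simp add: matrix_vector_mul_assoc)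

text \<open>
  Take the nonzero coefficient c (i0, a0) with a0 least and then i0 greatest, and divide
  the relation by X^a0: the quotient w lies in ker X^a0, which is contained in F_i0, and so
  do all its terms except c (i0, a0) g_i0.
\<close>
lemma admissible_cell_coefficient_eq_0:
  assumes adm: "admissible k g m" and sum0: "(\<Sum>p\<in>cells k m. c p *s cell_vec g p) = 0"
    and "p \<in> cells k m"
  shows "c p = 0"
proof (rule ccontr)
  define P where "P = {p \<in> cells k m. c p \<noteq> 0}"
  assume "c p \<noteq> 0"
  have finP: "finite P"
    using finite_cells unfolding P_def by auto
  moreover have "P \<noteq> {}"
    using \<open>c p \<noteq> 0\<close> \<open>p \<in> cells k m\<close> unfolding P_def by blast
  ultimately obtain i0 a0 where P0: "(i0, a0) \<in> P" and a0_le: "\<And>q. q \<in> P \<Longrightarrow> a0 \<le> snd q"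
    and i0_ge: "\<And>i. (i, a0) \<in> P \<Longrightarrow> i \<le> i0"
    using obtain_least_snd_greatest_fst by metis
  then have i0: "i0 < k" "a0 < m i0" "c (i0, a0) \<noteq> 0"
    unfolding P_def cells_def by auto
  define w where "w = (\<Sum>q\<in>P. c q *s cell_vec g (fst q, snd q - a0))"
  define r where "r = (\<Sum>q\<in>P - {(i0, a0)}. c q *s cell_vec g (fst q, snd q - a0))"
  have "mat_power X a0 *v w = (\<Sum>q\<in>P. c q *s cell_vec g q)"
    unfolding w_def cell_vec_def using a0_le
    by (simp add: vec.sum vec.scale matrix_vector_mul_assoc mat_power_add[symmetric])
  also have "\<dots> = (\<Sum>q\<in>cells k m. c q *s cell_vec g q)"
    unfolding P_def by (rule sum.mono_neutral_left[OF finite_cells]) auto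
  finally have "w \<in> flag g i0"
    using sum0 admissibleD(4)[OF adm i0(1,2)] ker_subset_ker_plus_range by auto
  moreover have "w = c (i0, a0) *s g i0 + r"
    unfolding w_def r_def by (simp add: sum.remove[OF finP P0] cell_vec_def)
  moreover have "fst q < i0 \<or> 0 < snd q - a0" if "q \<in> P - {(i0, a0)}" for q
    using that a0_le[of q] i0_ge[of "fst q"] by (cases q) force
  then have "r \<in> flag g i0"
    unfolding r_def
    by (intro vec.subspace_sum[OF subspace_flag] vec.subspace_scale[OF subspace_flag]
        cell_vec_in_flag) auto
  ultimately have "c (i0, a0) *s g i0 \<in> flag g i0"
    using vec.subspace_diff[OF subspace_flag, of w g i0 r] by simp
  then have "inverse (c (i0, a0)) *s (c (i0, a0) *s g i0) \<in> flag g i0"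
    by (rule vec.subspace_scale[OF subspace_flag])
  then have "g i0 \<in> flag g i0"
    using i0(3) by (simp add: vec.scale_scale)
  then show False
    using admissibleD(2)[OF adm i0(1)] by blast
qed

lemma admissible_cell_vec_inj:
  assumes adm: "admissible k g m"
  shows "inj_on (cell_vec g) (cells k m)"
proof (rule inj_onI, rule ccontr)
  fix p q
  assume pq: "p \<in> cells k m" "q \<in> cells k m" "cell_vec g p = cell_vec g q" "p \<noteq> q"
  define c where "c r = (if r = p then 1 else if r = q then -1 else 0 :: 'a)" for r
  have "c r *s cell_vec g r = (if r = p then cell_vec g r else 0) - (if r = q then cell_vec g r else 0)"
    for r
    using pq(4) unfolding c_def by auto
  then have "(\<Sum>r\<in>cells k m. c r *s cell_vec g r) = 0"
    using pq finite_cells[of k m] by (simp add: sum_subtractf sum.delta)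
  then have "c p = 0"
    using admissible_cell_coefficient_eq_0[OF adm _ pq(1)] by blast
  then show False
    unfolding c_def by simp
qed

lemma admissible_independent:
  assumes adm: "admissible k g m"
  shows "vec.independent (cell_vec g ` cells k m)"
proof (rule vec.independent_if_scalars_zero)
  show "finite (cell_vec g ` cells k m)"
    using finite_cells by simp
  fix f x
  assume "(\<Sum>x\<in>cell_vec g ` cells k m. f x *s x) = 0" and "x \<in> cell_vec g ` cells k m"
  then show "f x = 0"
    using admissible_cell_coefficient_eq_0[OF adm, of "\<lambda>p. f (cell_vec g p)"]
    by (auto simp: sum.reindex[OF admissible_cell_vec_inj[OF adm]])
qed

lemma admissible_length_le:
  assumes adm: "admissible k g m"
  shows "k \<le> vec.dim (UNIV :: ('a^'n) set)"
proof -
  have "k \<le> (\<Sum>i<k. m i)"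
    using sum_mono[of "{..<k}" "\<lambda>_. 1" m] admissible_exponent_pos[OF adm] by force
  also have "\<dots> = card (cell_vec g ` cells k m)"
    by (simp add: card_cells card_image[OF admissible_cell_vec_inj[OF adm]])
  also have "\<dots> \<le> vec.dim (UNIV :: ('a^'n) set)"
    by (rule vec.independent_card_le_dim[OF subset_UNIV admissible_independent[OF adm]])
  finally show ?thesis .
qed

lemma exists_admissible_flag_UNIV: "\<exists>k g m. admissible k g m \<and> flag g k = UNIV"
proof -
  let ?P = "\<lambda>k. \<exists>g m. admissible k g m"
  have "?P 0"
    by (auto simp: admissible_def)
  then obtain k where "?P k" and max: "\<And>k'. ?P k' \<Longrightarrow> k' \<le> k"
    using ex_has_greatest_nat[of ?P 0 "\<lambda>k. k" "Suc (vec.dim (UNIV :: ('a^'n) set))"]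
      admissible_length_le by (metis less_Suc_eq_le)
  then obtain g m where adm: "admissible k g m"
    by blast
  have "flag g k = UNIV"
    using admissible_extend[OF adm] max by (metis Suc_n_not_le_n)
  with adm show ?thesis
    by blast
qed

lemma admissible_cell_vecs_span:
  assumes adm: "admissible k g m" and full: "flag g k = UNIV"
  shows "vec.span (cell_vec g ` cells k m) = UNIV"
proof (rule subspace_eq_UNIV_if_contains_generators[OF full vec.subspace_span])
  have "X *v cell_vec g p \<in> vec.span (cell_vec g ` cells k m)" if "p \<in> cells k m" for p
  proof -
    obtain i a where p: "p = (i, a)" "i < k" "a < m i"
      using \<open>p \<in> cells k m\<close> unfolding cells_def by (cases p) auto
    show ?thesis
    proof (cases "Suc a < m i")
      case True
      then have "(i, Suc a) \<in> cells k m"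
        using p unfolding cells_def by auto
      then show ?thesis
        using p by (simp add: mult_X_cell_vec vec.span_base)
    next
      case False
      then have "cell_vec g (i, Suc a) = 0"
        using admissible_annihilated[OF adm p(2), of "Suc a"] unfolding cell_vec_def by simp
      then show ?thesis
        using p by (simp add: mult_X_cell_vec vec.span_zero)
    qed
  qed
  then show "X *v w \<in> vec.span (cell_vec g ` cells k m)"
    if "w \<in> vec.span (cell_vec g ` cells k m)" for w
    using matrix_vector_mult_span_in_subspace[OF vec.subspace_span _ that] by blast
  show "g i \<in> vec.span (cell_vec g ` cells k m)" if "i < k" for i
  proof -
    have "(i, 0) \<in> cells k m"
      using that admissible_exponent_pos[OF adm that] unfolding cells_def by auto
    then show ?thesis
      by (metis cell_vec_def fst_conv snd_conv mat_power.simps(1) matrix_vector_mul_lid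
          vec.span_base imageI)
  qed
qed

definition shift :: "nat \<Rightarrow> (nat \<Rightarrow> 'a^'n) \<Rightarrow> (nat \<Rightarrow> nat) \<Rightarrow> 'a^'n^'n" where
  "shift k g m = matrix (vec.construct (cell_vec g ` cells k m)
     (\<lambda>v. case inv_into (cells k m) (cell_vec g) v of
        (i, a) \<Rightarrow> if i = 0 then 0 else cell_vec g (i - 1, a)))"

lemma shift_cell_vec:
  assumes adm: "admissible k g m" and "(i, a) \<in> cells k m"
  shows "shift k g m *v cell_vec g (i, a) = (if i = 0 then 0 else cell_vec g (i - 1, a))"
  using assms unfolding shift_def
  by (simp add: matrix_works vec.linear_construct admissible_independent vec.construct_basis
      inv_into_f_f admissible_cell_vec_inj)

lemma shift_generator:
  assumes adm: "admissible k g m" and "i < k"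
  shows "shift k g m *v g i = (if i = 0 then 0 else g (i - 1))"
  using shift_cell_vec[OF adm, of i 0] admissible_exponent_pos[OF adm \<open>i < k\<close>] \<open>i < k\<close>
  unfolding cells_def cell_vec_def by auto

text \<open>This is where m_0 \<le> m_1 \<le> ... is needed: X^(m_i) must kill g_(i-1).\<close>
lemma shift_commute:
  assumes adm: "admissible k g m" and full: "flag g k = UNIV"
  shows "shift k g m ** X = X ** shift k g m"
proof -
  let ?S = "shift k g m"
  have "(?S ** X) *v v = (X ** ?S) *v v" for v
  proof (rule vec.linear_eq_on_span[OF matrix_vector_mul_linear_gen matrix_vector_mul_linear_gen])
    show "v \<in> vec.span (cell_vec g ` cells k m)"
      using admissible_cell_vecs_span[OF adm full] by simp
    fix x
    assume "x \<in> cell_vec g ` cells k m"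
    then obtain i a where x: "x = cell_vec g (i, a)" "(i, a) \<in> cells k m"
      by auto
    then have i: "i < k" "a < m i"
      unfolding cells_def by auto
    show "(?S ** X) *v x = (X ** ?S) *v x"
    proof (cases "Suc a < m i")
      case True
      then have "(i, Suc a) \<in> cells k m"
        using i unfolding cells_def by auto
      then show ?thesis
        using x shift_cell_vec[OF adm]
        by (simp add: matrix_vector_mul_assoc[symmetric] mult_X_cell_vec)
    next
      case False
      have "cell_vec g (i, Suc a) = 0"
        using False admissible_annihilated[OF adm i(1), of "Suc a"] unfolding cell_vec_def by simp
      moreover have "cell_vec g (i - 1, Suc a) = 0" if "i > 0"
        using False that i admissible_exponent_mono[OF adm, of "i - 1" i]
          admissible_annihilated[OF adm, of "i - 1" "Suc a"] unfolding cell_vec_def by simp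
      ultimately show ?thesis
        using x shift_cell_vec[OF adm x(2)]
        by (simp add: matrix_vector_mul_assoc[symmetric] mult_X_cell_vec)
    qed
  qed
  then show ?thesis
    by (simp add: matrix_eq)
qed

lemma pencil_nilpotent:
  assumes adm: "admissible k g m" and full: "flag g k = UNIV"
  shows "nilpotent_mat (mat \<alpha> ** Y + mat \<beta> ** shift k g m)"
proof -
  define Z where "Z = mat \<alpha> ** Y + mat \<beta> ** shift k g m"
  have ZX: "Z ** X = X ** Z"
    unfolding Z_def using pencil_commute commute shift_commute[OF adm full] by metis
  have "Z *v g j \<in> flag g i" if "j < Suc i" "i < k" for i j
  proof -
    have "Y *v g j \<in> flag g i"
      using admissibleD(3)[OF adm] flag_mono[of j i g] that by auto
    moreover have "shift k g m *v g j \<in> flag g i"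
      using shift_generator[OF adm] generator_in_flag vec.subspace_0[OF subspace_flag] that by auto
    ultimately show ?thesis
      unfolding Z_def pencil_mult_vec
      by (intro vec.subspace_add[OF subspace_flag] vec.subspace_scale[OF subspace_flag])
  qed
  then have "mat_power Z k *v v \<in> flag g 0" for v
    using mat_power_maps_chain[of k "flag g" Z v] commuting_mat_maps_flag[OF ZX] full by blast
  then show ?thesis
    using nilpotent_mat_if_power_into_range[OF nilpotent_X ZX] flag_0 unfolding Z_def by blast
qed

lemma shift_cyclic:
  assumes adm: "admissible k g m" and full: "flag g k = UNIV"
  shows "cyclic_pair X (shift k g m) (g (k - 1))"
  unfolding cyclic_pair_def
proof (intro allI impI, elim conjE)
  fix W
  assume W: "vec.subspace W" "\<forall>x\<in>W. X *v x \<in> W" "\<forall>x\<in>W. shift k g m *v x \<in> W"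
    "g (k - 1) \<in> W"
  have "g i \<in> W" if "i \<le> k - 1" for i
    using that
  proof (induction rule: inc_induct)
    case base
    show ?case by (rule W(4))
  next
    case (step n)
    then have "shift k g m *v g (Suc n) = g n"
      using shift_generator[OF adm, of "Suc n"] by simp
    with step.IH W(3) show ?case
      by metis
  qed
  then show "W = UNIV"
    using subspace_eq_UNIV_if_contains_generators[OF full W(1)] W(2) by auto
qed

end

theorem lemma7p3:
  fixes B1 B2 :: "complex^'n^'n"
  assumes "nilpotent_mat B1" and "nilpotent_mat B2" and "B1 ** B2 = B2 ** B1"
  shows "\<exists>B2' :: complex^'n^'n. \<exists>w :: complex^'n.
           nilpotent_mat B2' \<and>
           B2' ** B1 = B1 ** B2' \<and>
           (\<forall>\<alpha> \<beta> :: complex. nilpotent_mat (mat \<alpha> ** B2 + mat \<beta> ** B2')) \<and>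
           cyclic_pair B1 B2' w"
proof -
  interpret commuting_nilpotent_pair B1 B2
    using assms by unfold_locales
  obtain k g m where adm: "admissible k g m" and full: "flag g k = UNIV"
    using exists_admissible_flag_UNIV by blast
  have "nilpotent_mat (shift k g m)"
    using pencil_nilpotent[OF adm full, of 0 1] by (simp add: mat_0)
  then show ?thesis
    using shift_commute[OF adm full] pencil_nilpotent[OF adm full] shift_cyclic[OF adm full]
    by blast
qed

end
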